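(* Let $\mathbb{F}$ be a field, $A\in\mathbb{F}^{n\times n}$ such that a product of a row vector by $A$ costs at most $\mu$ arithmetic operations, $V_0\in\mathbb{F}^n$, and let a list of $d$ vectors $V_0,V_1,\dots,V_{d-1}\in\mathbb{F}^n$ be given. Consider the following check (for a finite subset $\mathbb{S}\subseteq\mathbb{F}$): uniformly sample $Y\in\mathbb{S}^n$, compute $H=Y^TA$, and accept iff $HV_{i-1}=Y^TV_i$ for every $i=1,\dots,d-1$. This check is perfectly complete (if $V_i=A^iV_0$ for all $i$ it always accepts), sound (if $V_i\neq A^iV_0$ for some $i$, it accepts with probability at most $1/|\mathbb{S}|$), and requires $\mu+4dn$ arithmetic operations.
   Context: Arithmetic operations are field operations in $\mathbb{F}$; equality tests and random sampling are not counted. *)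

theory Defs
  imports "HOL-Probability.Probability" "Jordan_Normal_Form.Matrix"
begin

text \<open>Operation-counting model: every field addition/multiplication costs 1.
  dot_cnt xs ys computes the dot product of two equal-length lists together with
  the number of field operations used (n multiplications and n-1 additions).\<close>

fun dot_cnt :: "'a::field list \<Rightarrow> 'a list \<Rightarrow> 'a \<times> nat" where
  "dot_cnt [x] [y] = (x * y, 1)"
| "dot_cnt (x # xs) (y # ys) = (let (s, c) = dot_cnt xs ys in (x * y + s, c + 2))"
| "dot_cnt _ _ = (0, 0)"

text \<open>The row vector Y^T A is represented as the (column) vector transpose A * Y.
  The procedure rowmul returns Y^T A together with the number of operations it used.\<close>

definition rowmul_spec :: "'a::field mat \<Rightarrow> nat \<Rightarrow> nat \<Rightarrow> ('a vec \<Rightarrow> 'a vec \<times> nat) \<Rightarrow> bool" where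
  "rowmul_spec A n \<mu> rowmul \<longleftrightarrow>
     (\<forall>Y \<in> carrier_vec n. fst (rowmul Y) = transpose_mat A *\<^sub>v Y \<and> snd (rowmul Y) \<le> \<mu>)"

definition check_run ::
  "('a::field vec \<Rightarrow> 'a vec \<times> nat) \<Rightarrow> nat \<Rightarrow> (nat \<Rightarrow> 'a vec) \<Rightarrow> 'a vec \<Rightarrow> bool \<times> nat" where
  "check_run rowmul d V Y =
     (let (H, c0) = rowmul Y;
          rs = map (\<lambda>i. (dot_cnt (list_of_vec H) (list_of_vec (V (i - 1))),
                         dot_cnt (list_of_vec Y) (list_of_vec (V i)))) [1..<d]
      in (list_all (\<lambda>(p, q). fst p = fst q) rs,
          c0 + sum_list (map (\<lambda>(p, q). snd p + snd q) rs)))"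

definition sample_space :: "nat \<Rightarrow> 'a set \<Rightarrow> 'a vec set" where
  "sample_space n S = {Y \<in> carrier_vec n. \<forall>j<n. Y $ j \<in> S}"

end

theory Submission
  imports Defs
begin

text \<open>If V is the orbit of V 0 then H V (i-1) = Y \<bullet> (A V (i-1)) = Y \<bullet> V i for H = Y A, so the
  check accepts.  Otherwise some step fails, V i \<noteq> A V (i-1), and every accepted Y is orthogonal
  to the nonzero vector w = V i - A V (i-1).  For a coordinate j with w j \<noteq> 0, the other
  coordinates of such a Y determine Y j, so at most one of the |S| choices of Y j is orthogonal
  to w.  The cost bound holds since each dot product of length n costs at most 2n operations.\<close>

lemma dot_cnt_eq_sum:
  "length xs = length ys \<Longrightarrow> fst (dot_cnt xs ys) = (\<Sum>i<length xs. xs ! i * ys ! i)"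
  by (induction xs ys rule: dot_cnt.induct)
     (auto simp: split_beta sum.lessThan_Suc_shift simp del: sum.lessThan_Suc)

lemma dot_cnt_cost_le: "snd (dot_cnt xs ys) \<le> 2 * length xs"
  by (induction xs ys rule: dot_cnt.induct) (auto simp: split_beta)

lemma dot_cnt_list_of_vec:
  assumes "u \<in> carrier_vec n" "v \<in> carrier_vec n"
  shows "fst (dot_cnt (list_of_vec u) (list_of_vec v)) = u \<bullet> v"
  using assms by (simp add: dot_cnt_eq_sum scalar_prod_def atLeast0LessThan)

lemma pow_mat_Suc_left:
  assumes "A \<in> carrier_mat n n"
  shows "A ^\<^sub>m Suc k = A * A ^\<^sub>m k"
proof (induction k)
  case 0
  then show ?case using assms by simp
next
  case (Suc k)
  have "A ^\<^sub>m Suc (Suc k) = (A * A ^\<^sub>m k) * A" using Suc by simp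
  also have "\<dots> = A * (A ^\<^sub>m k * A)" using assms by (simp add: assoc_mult_mat[of _ n n _ n _ n])
  finally show ?case by simp
qed

lemma orbit_iff_steps:
  assumes A: "A \<in> carrier_mat n n" and V: "\<forall>i<d. V i \<in> carrier_vec n"
  shows "(\<forall>i<d. V i = (A ^\<^sub>m i) *\<^sub>v V 0) \<longleftrightarrow> (\<forall>i. Suc i < d \<longrightarrow> V (Suc i) = A *\<^sub>v V i)"
proof (cases "d = 0")
  case False
  then have V0: "V 0 \<in> carrier_vec n" using V by simp
  have pow_Suc: "(A ^\<^sub>m Suc i) *\<^sub>v V 0 = A *\<^sub>v ((A ^\<^sub>m i) *\<^sub>v V 0)" for i
  proof -
    have "(A ^\<^sub>m Suc i) *\<^sub>v V 0 = (A * A ^\<^sub>m i) *\<^sub>v V 0" by (simp only: pow_mat_Suc_left[OF A])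
    also have "\<dots> = A *\<^sub>v ((A ^\<^sub>m i) *\<^sub>v V 0)"
      by (rule assoc_mult_mat_vec[of _ n n _ n]) (use A V0 in auto)
    finally show ?thesis .
  qed
  show ?thesis
  proof
    assume orbit: "\<forall>i<d. V i = (A ^\<^sub>m i) *\<^sub>v V 0"
    show "\<forall>i. Suc i < d \<longrightarrow> V (Suc i) = A *\<^sub>v V i"
    proof (intro allI impI)
      fix i assume "Suc i < d"
      then have "V (Suc i) = (A ^\<^sub>m Suc i) *\<^sub>v V 0" "V i = (A ^\<^sub>m i) *\<^sub>v V 0"
        using orbit Suc_lessD by blast+
      then show "V (Suc i) = A *\<^sub>v V i" by (metis pow_Suc)
    qed
  next
    assume steps: "\<forall>i. Suc i < d \<longrightarrow> V (Suc i) = A *\<^sub>v V i"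
    have "i < d \<Longrightarrow> V i = (A ^\<^sub>m i) *\<^sub>v V 0" for i
    proof (induction i)
      case 0
      show ?case using A V0 by simp
    next
      case (Suc i)
      then have "V i = (A ^\<^sub>m i) *\<^sub>v V 0" by simp
      then show ?case using Suc.prems steps pow_Suc by metis
    qed
    then show "\<forall>i<d. V i = (A ^\<^sub>m i) *\<^sub>v V 0" by blast
  qed
qed simp

lemma check_run_accepts_iff:
  assumes rowmul: "rowmul_spec A n \<mu> rowmul" and A: "A \<in> carrier_mat n n"
    and V: "\<forall>i<d. V i \<in> carrier_vec n" and Y: "Y \<in> carrier_vec n"
  shows "fst (check_run rowmul d V Y) \<longleftrightarrow> (\<forall>i. Suc i < d \<longrightarrow> Y \<bullet> (A *\<^sub>v V i) = Y \<bullet> V (Suc i))"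
proof -
  obtain c where rY: "rowmul Y = (transpose_mat A *\<^sub>v Y, c)"
    using rowmul Y by (metis prod.collapse rowmul_spec_def)
  have H: "transpose_mat A *\<^sub>v Y \<in> carrier_vec n" using A by (intro carrier_vecI) auto
  have dots: "fst (dot_cnt (list_of_vec (transpose_mat A *\<^sub>v Y)) (list_of_vec (V (i - 1))))
        = (transpose_mat A *\<^sub>v Y) \<bullet> V (i - 1)"
    "fst (dot_cnt (list_of_vec Y) (list_of_vec (V i))) = Y \<bullet> V i" if "i \<in> {1..<d}" for i
    using that V by (auto intro!: dot_cnt_list_of_vec[OF H] dot_cnt_list_of_vec[OF Y])
  have "fst (check_run rowmul d V Y) \<longleftrightarrow>
      (\<forall>i\<in>{1..<d}. (transpose_mat A *\<^sub>v Y) \<bullet> V (i - 1) = Y \<bullet> V i)"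
    using dots by (simp add: check_run_def rY list_all_iff)
  also have "\<dots> \<longleftrightarrow> (\<forall>i. Suc i < d \<longrightarrow> (transpose_mat A *\<^sub>v Y) \<bullet> V i = Y \<bullet> V (Suc i))"
    by (metis Suc_pred' atLeastLessThan_iff diff_Suc_1 One_nat_def gr0_conv_Suc zero_less_Suc le_simps(3))
  also have "\<dots> \<longleftrightarrow> (\<forall>i. Suc i < d \<longrightarrow> Y \<bullet> (A *\<^sub>v V i) = Y \<bullet> V (Suc i))"
    using A V Y by (simp add: transpose_vec_mult_scalar)
  finally show ?thesis .
qed

lemma check_run_cost_le:
  assumes rowmul: "rowmul_spec A n \<mu> rowmul" and A: "A \<in> carrier_mat n n"
    and Y: "Y \<in> carrier_vec n"
  shows "snd (check_run rowmul d V Y) \<le> \<mu> + 4 * d * n"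
proof -
  obtain c where rY: "rowmul Y = (transpose_mat A *\<^sub>v Y, c)" and c: "c \<le> \<mu>"
    using rowmul Y by (metis prod.collapse rowmul_spec_def)
  let ?cost = "\<lambda>i. snd (dot_cnt (list_of_vec (transpose_mat A *\<^sub>v Y)) (list_of_vec (V (i - 1))))
                  + snd (dot_cnt (list_of_vec Y) (list_of_vec (V i)))"
  have "snd (check_run rowmul d V Y) = c + sum_list (map ?cost [1..<d])"
    by (simp add: check_run_def rY comp_def)
  also have "sum_list (map ?cost [1..<d]) \<le> sum_list (map (\<lambda>_. 4 * n) [1..<d])"
  proof (rule sum_list_mono)
    fix i
    have "?cost i \<le> 2 * n + 2 * n"
      using A Y by (intro add_mono order.trans[OF dot_cnt_cost_le]) auto
    then show "?cost i \<le> 4 * n" by simp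
  qed
  also have "\<dots> \<le> 4 * d * n" by (simp add: sum_list_triv diff_mult_distrib)
  finally show ?thesis using c by simp
qed

lemma sample_space_finite:
  assumes "finite S" shows "finite (sample_space n S)"
proof -
  have "sample_space n S \<subseteq> (\<lambda>f. vec n f) ` PiE {..<n} (\<lambda>_. S)"
  proof
    fix Y assume Y: "Y \<in> sample_space n S"
    then have "Y = vec n (restrict (\<lambda>k. Y $ k) {..<n})"
      by (intro eq_vecI) (auto simp: sample_space_def)
    moreover have "restrict (\<lambda>k. Y $ k) {..<n} \<in> PiE {..<n} (\<lambda>_. S)"
      using Y by (auto simp: sample_space_def)
    ultimately show "Y \<in> (\<lambda>f. vec n f) ` PiE {..<n} (\<lambda>_. S)" by blast
  qed
  then show ?thesis using assms by (meson finite_PiE finite_imageI finite_lessThan finite_subset)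
qed

lemma sample_space_nonempty:
  assumes "S \<noteq> {}" shows "sample_space n S \<noteq> {}"
proof -
  obtain s where "s \<in> S" using assms by blast
  then have "vec n (\<lambda>_. s) \<in> sample_space n S" by (auto simp: sample_space_def)
  then show ?thesis by blast
qed

lemma orthogonal_eq_if_eq_off_coordinate:
  fixes w Y Y' :: "'a::field vec"
  assumes w: "w \<in> carrier_vec n" "j < n" "w $ j \<noteq> 0"
    and Y: "Y \<in> carrier_vec n" "Y \<bullet> w = 0" and Y': "Y' \<in> carrier_vec n" "Y' \<bullet> w = 0"
    and off: "\<And>k. k < n \<Longrightarrow> k \<noteq> j \<Longrightarrow> Y $ k = Y' $ k"
  shows "Y = Y'"
proof -
  have "Y - Y' = (Y $ j - Y' $ j) \<cdot>\<^sub>v unit_vec n j"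
    using Y Y' off w by (intro eq_vecI) (auto simp: unit_vec_def)
  moreover have "(Y - Y') \<bullet> w = 0"
    using Y Y' w by (simp add: minus_scalar_prod_distrib[of _ n])
  ultimately have "(Y $ j - Y' $ j) * w $ j = 0"
    using w by (simp add: smult_scalar_prod_distrib[of _ n] scalar_prod_left_unit)
  then have "Y $ j = Y' $ j" using w by simp
  then show ?thesis using Y Y' off by (intro eq_vecI) auto
qed

lemma card_orthogonal_samples_le:
  fixes w :: "'a::field vec"
  assumes w: "w \<in> carrier_vec n" "w \<noteq> 0\<^sub>v n" and S: "finite S"
  shows "card {Y \<in> sample_space n S. Y \<bullet> w = 0} * card S \<le> card (sample_space n S)"
proof -
  define B where "B = {Y \<in> sample_space n S. Y \<bullet> w = 0}"
  obtain j where j: "j < n" "w $ j \<noteq> 0"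
    using w by (metis eq_vecI carrier_vecD index_zero_vec)
  define g where "g = (\<lambda>(Y::'a vec, s). vec n (\<lambda>k. if k = j then s else Y $ k))"
  have "inj_on g (B \<times> S)"
  proof (rule inj_onI)
    fix p p' assume "p \<in> B \<times> S" "p' \<in> B \<times> S" and eq: "g p = g p'"
    then obtain Y s Y' s' where p: "p = (Y, s)" "p' = (Y', s')" and YB: "Y \<in> B" "Y' \<in> B"
      by (metis mem_Times_iff prod.collapse)
    have coord: "k < n \<Longrightarrow> (if k = j then s else Y $ k) = (if k = j then s' else Y' $ k)" for k
      using arg_cong[OF eq, of "\<lambda>v. v $ k"] by (simp add: g_def p)
    have off: "k < n \<Longrightarrow> k \<noteq> j \<Longrightarrow> Y $ k = Y' $ k" for k
      using coord[of k] by simp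
    have "Y = Y'"
      by (rule orthogonal_eq_if_eq_off_coordinate[of w n j])
         (use YB w j off in \<open>auto simp: B_def sample_space_def\<close>)
    moreover have "s = s'" using coord[OF j(1)] by simp
    ultimately show "p = p'" using p by simp
  qed
  moreover have "g ` (B \<times> S) \<subseteq> sample_space n S"
    by (auto simp: g_def B_def sample_space_def)
  ultimately have "card (B \<times> S) \<le> card (sample_space n S)"
    using card_inj_on_le sample_space_finite[OF S] by blast
  then show ?thesis by (simp add: card_cartesian_product B_def)
qed

lemma prob_orthogonal_le:
  fixes w :: "'a::field vec"
  assumes w: "w \<in> carrier_vec n" "w \<noteq> 0\<^sub>v n" and S: "finite S" "S \<noteq> {}"
  shows "measure_pmf.prob (pmf_of_set (sample_space n S)) {Y. Y \<bullet> w = 0} \<le> 1 / real (card S)"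
proof -
  let ?\<Omega> = "sample_space n S"
  have \<Omega>: "finite ?\<Omega>" "?\<Omega> \<noteq> {}"
    using sample_space_finite[OF S(1)] sample_space_nonempty[OF S(2)] by auto
  then have "0 < card ?\<Omega>" "0 < card S"
    using S by (auto simp: card_gt_0_iff)
  moreover have "real (card {Y \<in> ?\<Omega>. Y \<bullet> w = 0}) * real (card S) \<le> real (card ?\<Omega>)"
    using card_orthogonal_samples_le[OF w S(1)] of_nat_mono by fastforce
  ultimately show ?thesis
    using \<Omega> by (simp add: measure_pmf_of_set Collect_conj_eq field_simps)
qed

lemma vec_eq_iff_diff_eq_zero:
  fixes u v :: "'a::ab_group_add vec"
  assumes "u \<in> carrier_vec n" "v \<in> carrier_vec n"
  shows "u = v \<longleftrightarrow> u - v = 0\<^sub>v n"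
proof
  assume "u - v = 0\<^sub>v n"
  have "u $ k = v $ k" if "k < n" for k
  proof -
    have "(u - v) $ k = 0" using \<open>u - v = 0\<^sub>v n\<close> that by simp
    then show ?thesis using that assms by simp
  qed
  then show "u = v" using assms by (intro eq_vecI) auto
qed (use assms in simp)

lemma prob_check_run_accepts_le:
  assumes mu: "rowmul_spec A n \<mu> rowmul" and A: "A \<in> carrier_mat n n"
    and V: "\<forall>i<d. V i \<in> carrier_vec n" and S: "finite S" "S \<noteq> {}"
    and i: "Suc i < d" "V (Suc i) \<noteq> A *\<^sub>v V i"
  shows "measure_pmf.prob (pmf_of_set (sample_space n S)) {Y. fst (check_run rowmul d V Y)}
      \<le> 1 / real (card S)"
proof -
  let ?\<Omega> = "sample_space n S"
  let ?accepted = "{Y. fst (check_run rowmul d V Y)}"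
  define w where "w = V (Suc i) - A *\<^sub>v V i"
  have Vi: "V (Suc i) \<in> carrier_vec n" "A *\<^sub>v V i \<in> carrier_vec n"
    using A V i(1) by auto
  have w: "w \<in> carrier_vec n" "w \<noteq> 0\<^sub>v n"
    using Vi i(2) vec_eq_iff_diff_eq_zero[OF Vi] by (simp_all add: w_def)
  have "Y \<bullet> w = 0" if "Y \<in> ?\<Omega>" "Y \<in> ?accepted" for Y
  proof -
    have Y: "Y \<in> carrier_vec n" using that(1) by (simp add: sample_space_def)
    then show ?thesis using that(2) check_run_accepts_iff[OF mu A V Y] i(1) Vi
      by (simp add: w_def scalar_prod_minus_distrib[of Y n])
  qed
  then have "?\<Omega> \<inter> ?accepted \<subseteq> ?\<Omega> \<inter> {Y. Y \<bullet> w = 0}" by blast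
  then have "measure_pmf.prob (pmf_of_set ?\<Omega>) ?accepted
      \<le> measure_pmf.prob (pmf_of_set ?\<Omega>) {Y. Y \<bullet> w = 0}"
    using sample_space_finite[OF S(1)] sample_space_nonempty[OF S(2)]
    by (simp add: measure_pmf_of_set divide_right_mono card_mono)
  also have "\<dots> \<le> 1 / real (card S)" by (rule prob_orthogonal_le[OF w S])
  finally show ?thesis .
qed

theorem mainTheorem4:
  fixes A :: "'a::field mat" and V :: "nat \<Rightarrow> 'a vec" and S :: "'a set"
    and n d \<mu> :: nat and rowmul :: "'a vec \<Rightarrow> 'a vec \<times> nat"
  assumes A: "A \<in> carrier_mat n n"
    and V: "\<forall>i<d. V i \<in> carrier_vec n"
    and S: "finite S" "S \<noteq> {}"
    and mu: "rowmul_spec A n \<mu> rowmul"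
  shows "((\<forall>i<d. V i = (A ^\<^sub>m i) *\<^sub>v V 0) \<longrightarrow>
            (\<forall>Y \<in> sample_space n S. fst (check_run rowmul d V Y)))
       \<and> ((\<exists>i<d. V i \<noteq> (A ^\<^sub>m i) *\<^sub>v V 0) \<longrightarrow>
            measure_pmf.prob (pmf_of_set (sample_space n S)) {Y. fst (check_run rowmul d V Y)}
              \<le> 1 / real (card S))
       \<and> (\<forall>Y \<in> carrier_vec n. snd (check_run rowmul d V Y) \<le> \<mu> + 4 * d * n)"
proof (intro conjI impI ballI)
  show "fst (check_run rowmul d V Y)"
    if "\<forall>i<d. V i = (A ^\<^sub>m i) *\<^sub>v V 0" and "Y \<in> sample_space n S" for Y
  proof -
    have "Y \<in> carrier_vec n" using that(2) by (simp add: sample_space_def)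
    then show ?thesis
      using that(1) orbit_iff_steps[OF A V] check_run_accepts_iff[OF mu A V] by metis
  qed
next
  assume "\<exists>i<d. V i \<noteq> (A ^\<^sub>m i) *\<^sub>v V 0"
  then obtain i where "Suc i < d" "V (Suc i) \<noteq> A *\<^sub>v V i"
    using orbit_iff_steps[OF A V] by blast
  then show "measure_pmf.prob (pmf_of_set (sample_space n S)) {Y. fst (check_run rowmul d V Y)}
      \<le> 1 / real (card S)"
    by (rule prob_check_run_accepts_le[OF mu A V S])
next
  show "snd (check_run rowmul d V Y) \<le> \<mu> + 4 * d * n" if "Y \<in> carrier_vec n" for Y
    using check_run_cost_le[OF mu A that] .
qed

end
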